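(* Let $X$ be a Banach space of analytic functions on $\mathbb{U}$ with $H_\infty\hookrightarrow X\hookrightarrow H_2$, and let $E$ be an order-continuous Banach sequence lattice with $\ell_2\hookrightarrow E\hookrightarrow\ell_\infty$. Let $\lambda=\{\lambda_n\}$ be such that the multiplier operator $M_\lambda\colon X\to E$, $M_\lambda f=\{\lambda_n\hat f(n)\}$, is a bounded operator. Then $M_\lambda\colon X\to E$ is compact if and only if \[\limsup_{n\to\infty}|\lambda_n|=0.\]
   Context: $\mathbb{U}$ is the open unit disk, $H_p$ the classical Hardy spaces on $\mathbb{U}$, $f=\sum_{n\ge0}\hat f(n)z^n$ the Taylor expansion; "$\hookrightarrow$" denotes continuous inclusion. A Banach sequence lattice on $\mathbb{Z}_+$ is a Banach space $E$ of sequences with $|y_n|\le|x_n|$ for all $n$, $x\in E$ implying $y\in E$ and $\|y\|_E\le\|x\|_E$; it is order-continuous if every nonnegative nonincreasing sequence in $E$ converging to $0$ pointwise converges to $0$ in norm. *)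

theory Defs
  imports "HOL-Analysis.Analysis" "HOL-Complex_Analysis.Complex_Analysis" "HOL-Library.Liminf_Limsup"
begin

definition taylor_coeff :: "(complex \<Rightarrow> complex) \<Rightarrow> nat \<Rightarrow> complex" where
  "taylor_coeff f n = (deriv ^^ n) f 0 / of_nat (fact n)"

(* Analytic functions on the unit disk U, represented canonically as functions vanishing outside U *)
definition analytic_U :: "(complex \<Rightarrow> complex) set" where
  "analytic_U = {f. f holomorphic_on ball 0 1 \<and> (\<forall>z. z \<notin> ball 0 1 \<longrightarrow> f z = 0)}"

definition banach_fun_space :: "('a \<Rightarrow> complex) set \<Rightarrow> (('a \<Rightarrow> complex) \<Rightarrow> real) \<Rightarrow> bool" where
  "banach_fun_space S N \<longleftrightarrow>
     (\<lambda>t. 0) \<in> S \<and> (\<forall>x\<in>S. \<forall>y\<in>S. (\<lambda>t. x t + y t) \<in> S) \<and> (\<forall>c. \<forall>x\<in>S. (\<lambda>t. c * x t) \<in> S) \<and>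
     (\<forall>x\<in>S. N x \<ge> 0) \<and> (\<forall>x\<in>S. N x = 0 \<longleftrightarrow> x = (\<lambda>t. 0)) \<and>
     (\<forall>c. \<forall>x\<in>S. N (\<lambda>t. c * x t) = cmod c * N x) \<and>
     (\<forall>x\<in>S. \<forall>y\<in>S. N (\<lambda>t. x t + y t) \<le> N x + N y) \<and>
     (\<forall>u. (\<forall>k. u k \<in> S) \<and> (\<forall>e>0. \<exists>M. \<forall>m\<ge>M. \<forall>n\<ge>M. N (\<lambda>t. u m t - u n t) < e)
          \<longrightarrow> (\<exists>v\<in>S. (\<lambda>k. N (\<lambda>t. u k t - v t)) \<longlonglongrightarrow> 0))"

definition banach_space_analytic_U :: "(complex \<Rightarrow> complex) set \<Rightarrow> ((complex \<Rightarrow> complex) \<Rightarrow> real) \<Rightarrow> bool" where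
  "banach_space_analytic_U X N \<longleftrightarrow> X \<subseteq> analytic_U \<and> banach_fun_space X N"

definition H_inf :: "(complex \<Rightarrow> complex) set" where
  "H_inf = {f \<in> analytic_U. bounded (f ` ball 0 1)}"

definition H_inf_norm :: "(complex \<Rightarrow> complex) \<Rightarrow> real" where
  "H_inf_norm f = (SUP z\<in>ball 0 1. cmod (f z))"

definition H2 :: "(complex \<Rightarrow> complex) set" where
  "H2 = {f \<in> analytic_U. summable (\<lambda>n. (cmod (taylor_coeff f n))\<^sup>2)}"

definition H2_norm :: "(complex \<Rightarrow> complex) \<Rightarrow> real" where
  "H2_norm f = sqrt (\<Sum>n. (cmod (taylor_coeff f n))\<^sup>2)"

definition H_inf_embeds :: "(complex \<Rightarrow> complex) set \<Rightarrow> ((complex \<Rightarrow> complex) \<Rightarrow> real) \<Rightarrow> bool" where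
  "H_inf_embeds X N \<longleftrightarrow> H_inf \<subseteq> X \<and> (\<exists>C. \<forall>f\<in>H_inf. N f \<le> C * H_inf_norm f)"

definition embeds_H2 :: "(complex \<Rightarrow> complex) set \<Rightarrow> ((complex \<Rightarrow> complex) \<Rightarrow> real) \<Rightarrow> bool" where
  "embeds_H2 X N \<longleftrightarrow> X \<subseteq> H2 \<and> (\<exists>C. \<forall>f\<in>X. H2_norm f \<le> C * N f)"

definition banach_seq_lattice :: "(nat \<Rightarrow> complex) set \<Rightarrow> ((nat \<Rightarrow> complex) \<Rightarrow> real) \<Rightarrow> bool" where
  "banach_seq_lattice E N \<longleftrightarrow> banach_fun_space E N \<and>
     (\<forall>x\<in>E. \<forall>y. (\<forall>n. cmod (y n) \<le> cmod (x n)) \<longrightarrow> y \<in> E \<and> N y \<le> N x)"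

definition order_continuous :: "(nat \<Rightarrow> complex) set \<Rightarrow> ((nat \<Rightarrow> complex) \<Rightarrow> real) \<Rightarrow> bool" where
  "order_continuous E N \<longleftrightarrow>
     (\<forall>u :: nat \<Rightarrow> nat \<Rightarrow> real.
        (\<forall>k. (\<lambda>n. complex_of_real (u k n)) \<in> E) \<and> (\<forall>k n. 0 \<le> u k n) \<and>
        (\<forall>k n. u (Suc k) n \<le> u k n) \<and> (\<forall>n. (\<lambda>k. u k n) \<longlonglongrightarrow> 0)
        \<longrightarrow> (\<lambda>k. N (\<lambda>n. complex_of_real (u k n))) \<longlonglongrightarrow> 0)"

definition l2_embeds :: "(nat \<Rightarrow> complex) set \<Rightarrow> ((nat \<Rightarrow> complex) \<Rightarrow> real) \<Rightarrow> bool" where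
  "l2_embeds E N \<longleftrightarrow> (\<exists>C. \<forall>x. summable (\<lambda>n. (cmod (x n))\<^sup>2) \<longrightarrow>
      x \<in> E \<and> N x \<le> C * sqrt (\<Sum>n. (cmod (x n))\<^sup>2))"

definition embeds_linf :: "(nat \<Rightarrow> complex) set \<Rightarrow> ((nat \<Rightarrow> complex) \<Rightarrow> real) \<Rightarrow> bool" where
  "embeds_linf E N \<longleftrightarrow> (\<exists>C. \<forall>x\<in>E. bounded (range x) \<and> (SUP n. cmod (x n)) \<le> C * N x)"

definition multiplier :: "(nat \<Rightarrow> complex) \<Rightarrow> (complex \<Rightarrow> complex) \<Rightarrow> (nat \<Rightarrow> complex)" where
  "multiplier lam f = (\<lambda>n. lam n * taylor_coeff f n)"

definition bounded_multiplier ::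
  "(complex \<Rightarrow> complex) set \<Rightarrow> ((complex \<Rightarrow> complex) \<Rightarrow> real) \<Rightarrow> (nat \<Rightarrow> complex) set \<Rightarrow> ((nat \<Rightarrow> complex) \<Rightarrow> real) \<Rightarrow> (nat \<Rightarrow> complex) \<Rightarrow> bool" where
  "bounded_multiplier X NX E NE lam \<longleftrightarrow>
     (\<forall>f\<in>X. multiplier lam f \<in> E) \<and> (\<exists>C. \<forall>f\<in>X. NE (multiplier lam f) \<le> C * NX f)"

definition compact_multiplier ::
  "(complex \<Rightarrow> complex) set \<Rightarrow> ((complex \<Rightarrow> complex) \<Rightarrow> real) \<Rightarrow> (nat \<Rightarrow> complex) set \<Rightarrow> ((nat \<Rightarrow> complex) \<Rightarrow> real) \<Rightarrow> (nat \<Rightarrow> complex) \<Rightarrow> bool" where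
  "compact_multiplier X NX E NE lam \<longleftrightarrow>
     (\<forall>f :: nat \<Rightarrow> complex \<Rightarrow> complex. (\<forall>k. f k \<in> X) \<and> bounded (range (\<lambda>k. NX (f k))) \<longrightarrow>
        (\<exists>r g. strict_mono r \<and> g \<in> E \<and> (\<lambda>k. NE (\<lambda>n. multiplier lam (f (r k)) n - g n)) \<longlonglongrightarrow> 0))"

end

theory Submission
  imports Defs "HOL-Library.Diagonal_Subsequence"
begin

text \<open>
  A bounded sequence in \<open>X \<hookrightarrow> H\<^sub>2\<close> has Taylor coefficients bounded in \<open>\<ell>\<^sub>2\<close>, so a
  diagonal subsequence converges coordinatewise. If \<open>\<lambda>\<^sub>n \<rightarrow> 0\<close>, multiplying by \<open>\<lambda>\<close>
  upgrades this to convergence in \<open>\<ell>\<^sub>2\<close>, hence in \<open>E\<close>: finitely many coordinates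
  converge, and the tail is uniformly small because \<open>\<lambda>\<close> is small there.
  Conversely, the monomials \<open>z\<^sup>m\<close> are bounded in \<open>H\<^sub>\<infinity> \<hookrightarrow> X\<close> and
  \<open>M\<^sub>\<lambda> z\<^sup>m = \<lambda>\<^sub>m e\<^sub>m\<close>. Along any subsequence, compactness gives a further subsequence of
  these images converging in \<open>E \<hookrightarrow> \<ell>\<^sub>\<infinity>\<close>; the limit must vanish since \<open>e\<^sub>m \<rightarrow> 0\<close>
  coordinatewise, so \<open>\<lambda>\<^sub>m \<rightarrow> 0\<close> along it.
\<close>

lemma bounded_coordinates_imp_convergent_subseq:
  fixes c :: "nat \<Rightarrow> nat \<Rightarrow> 'a::heine_borel"
  assumes "\<And>n. bounded (range (\<lambda>k. c k n))"
  obtains r where "strict_mono r" "\<And>n. convergent (\<lambda>k. c (r k) n)"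
proof -
  interpret subseqs "\<lambda>n s. convergent (\<lambda>k. c (s k) n)"
  proof
    fix n and s :: "nat \<Rightarrow> nat"
    have "bounded (range (\<lambda>k. c (s k) n))"
      using assms[of n] by (rule bounded_subset) auto
    then obtain l r where "strict_mono r" "((\<lambda>k. c (s k) n) \<circ> r) \<longlonglongrightarrow> l"
      using bounded_imp_convergent_subsequence by blast
    then show "\<exists>r. strict_mono r \<and> convergent (\<lambda>k. c ((s \<circ> r) k) n)"
      by (auto simp: convergent_def o_def)
  qed
  have "convergent (\<lambda>k. c (diagseq k) n)" for n
  proof -
    \<comment> \<open>\<open>diagseq_holds\<close> only controls the diagonal from index \<open>Suc n\<close> on.\<close>
    have "convergent (\<lambda>k. c ((diagseq \<circ> (+) (Suc n)) k) n)"
    proof (rule diagseq_holds)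
      fix r s :: "nat \<Rightarrow> nat" and n
      assume "strict_mono r" "convergent (\<lambda>k. c (s k) n)"
      then show "convergent (\<lambda>k. c ((s \<circ> r) k) n)"
        using LIMSEQ_subseq_LIMSEQ[of "\<lambda>k. c (s k) n" _ r] by (auto simp: convergent_def o_def)
    qed
    then show ?thesis
      using convergent_ignore_initial_segment[of "\<lambda>k. c (diagseq k) n" "Suc n"]
      by (simp add: o_def add.commute)
  qed
  with subseq_diagseq show ?thesis by (rule that)
qed

lemma limsup_norm_eq_0_iff:
  fixes x :: "nat \<Rightarrow> 'a::real_normed_vector"
  shows "limsup (\<lambda>n. ereal (norm (x n))) = 0 \<longleftrightarrow> x \<longlonglongrightarrow> 0"
proof
  assume sup: "limsup (\<lambda>n. ereal (norm (x n))) = 0"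
  have "0 \<le> liminf (\<lambda>n. ereal (norm (x n)))"
    by (rule Liminf_bounded) auto
  moreover have "liminf (\<lambda>n. ereal (norm (x n))) \<le> limsup (\<lambda>n. ereal (norm (x n)))"
    by (rule Liminf_le_Limsup) simp
  ultimately have "(\<lambda>n. ereal (norm (x n))) \<longlonglongrightarrow> 0"
    using sup by (intro Liminf_eq_Limsup) auto
  then show "x \<longlonglongrightarrow> 0"
    by (simp add: zero_ereal_def tendsto_norm_zero_iff)
next
  assume "x \<longlonglongrightarrow> 0"
  then have "(\<lambda>n. ereal (norm (x n))) \<longlonglongrightarrow> 0"
    by (simp add: zero_ereal_def tendsto_norm_zero_iff)
  then show "limsup (\<lambda>n. ereal (norm (x n))) = 0"
    by (intro lim_imp_Limsup) auto
qed

lemma limsup_norm_eq_0_if_subseqs_tendsto_0: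
  fixes x :: "nat \<Rightarrow> 'a::real_normed_vector"
  assumes "\<And>s :: nat \<Rightarrow> nat. strict_mono s \<Longrightarrow>
      \<exists>r :: nat \<Rightarrow> nat. strict_mono r \<and> (\<lambda>k. x (s (r k))) \<longlonglongrightarrow> 0"
  shows "limsup (\<lambda>n. ereal (norm (x n))) = 0"
proof -
  define u where "u n = ereal (norm (x n))" for n
  obtain s where s: "strict_mono s" and "(u \<circ> s) \<longlonglongrightarrow> limsup u"
    using limsup_subseq_lim by blast
  moreover obtain r where r: "strict_mono r" and "(\<lambda>k. x (s (r k))) \<longlonglongrightarrow> 0"
    using assms[OF s] by blast
  ultimately have "(\<lambda>k. u (s (r k))) \<longlonglongrightarrow> limsup u" "(\<lambda>k. u (s (r k))) \<longlonglongrightarrow> 0"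
    using LIMSEQ_subseq_LIMSEQ[of "u \<circ> s" _ r]
    by (auto simp: o_def u_def zero_ereal_def tendsto_norm_zero_iff)
  then show ?thesis
    unfolding u_def[symmetric] using LIMSEQ_unique by blast
qed

lemma spike_heights_tendsto_0:
  fixes lam g :: "nat \<Rightarrow> 'a::real_normed_vector" and m :: "nat \<Rightarrow> nat" and t :: "nat \<Rightarrow> real"
  assumes m: "filterlim m at_top sequentially"
    and close: "\<And>k n. norm ((if n = m k then lam (m k) else 0) - g n) \<le> t k"
    and t: "t \<longlonglongrightarrow> 0"
  shows "(\<lambda>k. lam (m k)) \<longlonglongrightarrow> 0"
proof -
  have "g n = 0" for n
  proof -
    have "eventually (\<lambda>k. Suc n \<le> m k) sequentially"
      using m by (simp add: filterlim_at_top)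
    then have "eventually (\<lambda>k. norm (g n) \<le> t k) sequentially"
    proof eventually_elim
      case (elim k)
      then show ?case using close[where k=k and n=n] by simp
    qed
    then have "norm (g n) \<le> 0"
      by (rule tendsto_le[OF trivial_limit_sequentially t tendsto_const])
    then show ?thesis by simp
  qed
  then have "norm (lam (m k)) \<le> t k" for k
    using close[where k=k and n="m k"] by simp
  then show ?thesis
    by (intro Lim_null_comparison[OF always_eventually t]) simp
qed

lemma summable_pointwise_limit_nonneg:
  fixes G :: "nat \<Rightarrow> nat \<Rightarrow> real"
  assumes nonneg: "\<And>k n. 0 \<le> G k n" and summable: "\<And>k. summable (G k)"
    and bound: "\<And>k. (\<Sum>n. G k n) \<le> B" and lim: "\<And>n. (\<lambda>k. G k n) \<longlonglongrightarrow> g n"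
  shows "summable g" and "(\<Sum>n. g n) \<le> B"
proof -
  have partial: "(\<Sum>n<N. g n) \<le> B" for N
  proof (rule LIMSEQ_le_const2)
    show "(\<lambda>k. \<Sum>n<N. G k n) \<longlonglongrightarrow> (\<Sum>n<N. g n)"
      by (intro tendsto_sum lim)
    show "\<exists>M. \<forall>k\<ge>M. (\<Sum>n<N. G k n) \<le> B"
      using sum_le_suminf[OF summable, of "{..<N}"] bound nonneg by (meson finite_lessThan order_trans)
  qed
  have "0 \<le> g n" for n
    using lim[of n] nonneg by (intro LIMSEQ_le_const) auto
  then show "summable g"
    using partial by (intro summableI_nonneg_bounded[where x=B])
  then show "(\<Sum>n. g n) \<le> B"
    using partial by (rule suminf_le_const)
qed

lemma suminf_weighted_le_head_plus_tail:
  fixes w G :: "nat \<Rightarrow> real"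
  assumes nonneg: "\<And>n. 0 \<le> G n" and summable: "summable G"
    and wG_summable: "summable (\<lambda>n. w n * G n)"
    and small: "\<And>n. n \<ge> N \<Longrightarrow> w n \<le> \<eta>"
  shows "(\<Sum>n. w n * G n) \<le> (\<Sum>n<N. w n * G n) + \<eta> * (\<Sum>n. G (n + N))"
proof -
  have "(\<Sum>n. w n * G n) = (\<Sum>n. w (n + N) * G (n + N)) + (\<Sum>n<N. w n * G n)"
    by (rule suminf_split_initial_segment[OF wG_summable])
  also have "(\<Sum>n. w (n + N) * G (n + N)) \<le> (\<Sum>n. \<eta> * G (n + N))"
  proof (rule suminf_le)
    show "w (n + N) * G (n + N) \<le> \<eta> * G (n + N)" for n
      using small[of "n + N"] nonneg by (simp add: mult_right_mono)
  qed (intro summable_mult summable_ignore_initial_segment wG_summable summable)+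
  also have "(\<Sum>n. \<eta> * G (n + N)) = \<eta> * (\<Sum>n. G (n + N))"
    by (intro suminf_mult summable_ignore_initial_segment summable)
  finally show ?thesis by simp
qed

lemma suminf_vanishing_weight_tendsto_0:
  fixes w :: "nat \<Rightarrow> real" and G :: "nat \<Rightarrow> nat \<Rightarrow> real"
  assumes nonneg: "\<And>k n. 0 \<le> G k n" and summable: "\<And>k. summable (G k)"
    and bound: "\<And>k. (\<Sum>n. G k n) \<le> B" and lim: "\<And>n. (\<lambda>k. G k n) \<longlonglongrightarrow> 0"
    and w_nonneg: "\<And>n. 0 \<le> w n" and w_lim: "w \<longlonglongrightarrow> 0"
  shows "\<And>k. summable (\<lambda>n. w n * G k n)" and "(\<lambda>k. \<Sum>n. w n * G k n) \<longlonglongrightarrow> 0"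
proof -
  have "Bseq w"
    using w_lim by (intro convergent_imp_Bseq convergentI)
  then obtain K where K: "\<And>n. w n \<le> K"
    unfolding Bseq_def by (metis abs_le_D1 real_norm_def)
  show wG_summable: "summable (\<lambda>n. w n * G k n)" for k
    by (rule summable_comparison_test'[OF summable_mult[OF summable[of k], of K]])
      (use nonneg w_nonneg K in \<open>auto intro: mult_right_mono\<close>)
  have B_nonneg: "0 \<le> B"
    using bound[of 0] suminf_nonneg[OF summable nonneg] by (meson order_trans)
  show "(\<lambda>k. \<Sum>n. w n * G k n) \<longlonglongrightarrow> 0"
  proof (rule LIMSEQ_I)
    fix \<epsilon> :: real assume "0 < \<epsilon>"
    define \<eta> where "\<eta> = \<epsilon> / (2 * (B + 1))"
    have "0 < \<eta>" and "\<eta> * B < \<epsilon> / 2"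
      using \<open>0 < \<epsilon>\<close> B_nonneg by (simp_all add: \<eta>_def field_simps)
    obtain N where small: "\<And>n. n \<ge> N \<Longrightarrow> w n \<le> \<eta>"
      using w_lim w_nonneg \<open>0 < \<eta>\<close> unfolding LIMSEQ_iff
      by (metis abs_of_nonneg diff_zero less_imp_le real_norm_def)
    have "(\<lambda>k. \<Sum>n<N. w n * G k n) \<longlonglongrightarrow> 0"
      using tendsto_sum[of "{..<N}" "\<lambda>n k. w n * G k n" "\<lambda>_. 0"] lim
      by (simp add: tendsto_mult_right_zero)
    then obtain M where head: "\<And>k. k \<ge> M \<Longrightarrow> (\<Sum>n<N. w n * G k n) < \<epsilon> / 2"
      using \<open>0 < \<epsilon>\<close> unfolding LIMSEQ_iff by (metis abs_less_iff diff_zero half_gt_zero real_norm_def)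
    have tail: "\<eta> * (\<Sum>n. G k (n + N)) \<le> \<eta> * B" for k
    proof -
      have "(\<Sum>n. G k (n + N)) \<le> (\<Sum>n. G k n)"
        using suminf_split_initial_segment[OF summable, of k N] sum_nonneg[of "{..<N}" "G k"] nonneg
        by simp
      then show ?thesis
        using bound[of k] \<open>0 < \<eta>\<close> by (simp add: mult_left_mono)
    qed
    have "\<bar>\<Sum>n. w n * G k n\<bar> < \<epsilon>" if "k \<ge> M" for k
    proof -
      have "0 \<le> (\<Sum>n. w n * G k n)"
        using nonneg w_nonneg by (intro suminf_nonneg wG_summable) simp
      moreover have "(\<Sum>n. w n * G k n) \<le> (\<Sum>n<N. w n * G k n) + \<eta> * B"
        using suminf_weighted_le_head_plus_tail[where G="G k" and N=N and \<eta>=\<eta>,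
            OF nonneg summable wG_summable small] tail[of k]
        by simp
      ultimately show ?thesis
        using head[OF that] \<open>\<eta> * B < \<epsilon> / 2\<close> by simp
    qed
    then show "\<exists>M. \<forall>k\<ge>M. norm ((\<Sum>n. w n * G k n) - 0) < \<epsilon>"
      by auto
  qed
qed

lemma norm_diff_squared_le:
  fixes x y :: "'a::real_normed_vector"
  shows "(norm (x - y))\<^sup>2 \<le> 2 * (norm x)\<^sup>2 + 2 * (norm y)\<^sup>2"
proof -
  have "(norm (x - y))\<^sup>2 \<le> (norm x + norm y)\<^sup>2"
    by (simp add: power_mono norm_triangle_ineq4)
  also have "\<dots> \<le> 2 * (norm x)\<^sup>2 + 2 * (norm y)\<^sup>2"
    using zero_le_power2[of "norm x - norm y"] by (simp add: power2_eq_square algebra_simps)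
  finally show ?thesis .
qed

lemma vanishing_multiplier_l2_tendsto:
  fixes F :: "nat \<Rightarrow> nat \<Rightarrow> 'a::real_normed_field" and lam a :: "nat \<Rightarrow> 'a"
  assumes summable: "\<And>k. summable (\<lambda>n. (norm (F k n))\<^sup>2)"
    and bound: "\<And>k. (\<Sum>n. (norm (F k n))\<^sup>2) \<le> D"
    and lim: "\<And>n. (\<lambda>k. F k n) \<longlonglongrightarrow> a n" and lam: "lam \<longlonglongrightarrow> 0"
  shows "summable (\<lambda>n. (norm (lam n * a n))\<^sup>2)"
    and "\<And>k. summable (\<lambda>n. (norm (lam n * F k n - lam n * a n))\<^sup>2)"
    and "(\<lambda>k. \<Sum>n. (norm (lam n * F k n - lam n * a n))\<^sup>2) \<longlonglongrightarrow> 0"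
proof -
  have "(\<lambda>k. (norm (F k n))\<^sup>2) \<longlonglongrightarrow> (norm (a n))\<^sup>2" for n
    by (intro tendsto_intros lim)
  then have a_summable: "summable (\<lambda>n. (norm (a n))\<^sup>2)"
    and a_bound: "(\<Sum>n. (norm (a n))\<^sup>2) \<le> D"
    using summable_pointwise_limit_nonneg[where G="\<lambda>k n. (norm (F k n))\<^sup>2", OF _ summable bound]
    by simp_all
  define G where "G k n = (norm (F k n - a n))\<^sup>2" for k n
  have G_le: "G k n \<le> 2 * (norm (F k n))\<^sup>2 + 2 * (norm (a n))\<^sup>2" for k n
    unfolding G_def by (rule norm_diff_squared_le)
  have dominant_summable: "summable (\<lambda>n. 2 * (norm (F k n))\<^sup>2 + 2 * (norm (a n))\<^sup>2)" for k
    by (intro summable_add summable_mult summable a_summable)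
  have G_summable: "summable (G k)" for k
    by (rule summable_comparison_test'[OF dominant_summable[of k]]) (simp add: G_def norm_diff_squared_le)
  have G_bound: "(\<Sum>n. G k n) \<le> 4 * D" for k
  proof -
    have "(\<Sum>n. G k n) \<le> (\<Sum>n. 2 * (norm (F k n))\<^sup>2 + 2 * (norm (a n))\<^sup>2)"
      by (rule suminf_le[OF G_le G_summable dominant_summable])
    also have "\<dots> = 2 * (\<Sum>n. (norm (F k n))\<^sup>2) + 2 * (\<Sum>n. (norm (a n))\<^sup>2)"
      using summable a_summable by (simp add: suminf_add[symmetric] suminf_mult summable_mult)
    finally show ?thesis
      using bound[of k] a_bound by simp
  qed
  have G_lim: "(\<lambda>k. G k n) \<longlonglongrightarrow> 0" for n
    unfolding G_def using lim[of n] by (auto intro!: tendsto_eq_intros simp: LIM_zero_iff)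
  have w_lim: "(\<lambda>n. (norm (lam n))\<^sup>2) \<longlonglongrightarrow> 0"
    using tendsto_power[OF tendsto_norm[OF lam], of 2] by simp
  have diff_eq: "(norm (lam n * F k n - lam n * a n))\<^sup>2 = (norm (lam n))\<^sup>2 * G k n" for k n
    by (simp add: G_def right_diff_distrib[symmetric] norm_mult power_mult_distrib)
  show "\<And>k. summable (\<lambda>n. (norm (lam n * F k n - lam n * a n))\<^sup>2)"
    and "(\<lambda>k. \<Sum>n. (norm (lam n * F k n - lam n * a n))\<^sup>2) \<longlonglongrightarrow> 0"
    unfolding diff_eq using suminf_vanishing_weight_tendsto_0[OF _ G_summable G_bound G_lim _ w_lim]
    by (auto simp: G_def)
  have "eventually (\<lambda>n. norm (lam n) < 1) sequentially"
    using order_tendstoD(2)[OF tendsto_norm_zero[OF lam]] by simp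
  then have "eventually (\<lambda>n. norm ((norm (lam n * a n))\<^sup>2) \<le> (norm (a n))\<^sup>2) sequentially"
    by eventually_elim (simp add: norm_mult power_mult_distrib mult_left_le_one_le power_le_one less_imp_le)
  then show "summable (\<lambda>n. (norm (lam n * a n))\<^sup>2)"
    using a_summable by (rule summable_comparison_test_ev)
qed

lemma banach_fun_space_norm_nonneg: "banach_fun_space S N \<Longrightarrow> x \<in> S \<Longrightarrow> 0 \<le> N x"
  by (simp add: banach_fun_space_def)

lemma banach_fun_space_diff:
  assumes "banach_fun_space S N" "x \<in> S" "y \<in> S"
  shows "(\<lambda>t. x t - y t) \<in> S"
proof -
  from assms(1) have add: "\<And>x y. x \<in> S \<Longrightarrow> y \<in> S \<Longrightarrow> (\<lambda>t. x t + y t) \<in> S"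
    and scale: "\<And>c x. x \<in> S \<Longrightarrow> (\<lambda>t. c * x t) \<in> S"
    by (simp_all add: banach_fun_space_def)
  have "(\<lambda>t. x t + (-1) * y t) \<in> S"
    by (intro add scale assms)
  then show ?thesis by simp
qed

lemma taylor_coeffs_bounded_in_l2:
  assumes "embeds_H2 X NX" and f: "\<And>k. f k \<in> X" and bounded: "bounded (range (\<lambda>k. NX (f k)))"
  obtains D where "\<And>k. summable (\<lambda>n. (cmod (taylor_coeff (f k) n))\<^sup>2)"
    and "\<And>k. (\<Sum>n. (cmod (taylor_coeff (f k) n))\<^sup>2) \<le> D"
proof -
  obtain B where B: "\<And>k. \<bar>NX (f k)\<bar> \<le> B"
    using bounded unfolding bounded_iff by auto
  obtain C where "X \<subseteq> H2" and C: "\<And>g. g \<in> X \<Longrightarrow> H2_norm g \<le> C * NX g"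
    using assms(1) unfolding embeds_H2_def by blast
  have "H2_norm (f k) \<le> \<bar>C\<bar> * B" for k
  proof -
    have "H2_norm (f k) \<le> C * NX (f k)"
      by (rule C[OF f])
    also have "\<dots> \<le> \<bar>C\<bar> * \<bar>NX (f k)\<bar>"
      using abs_ge_self[of "C * NX (f k)"] by (simp add: abs_mult)
    also have "\<dots> \<le> \<bar>C\<bar> * B"
      using B by (simp add: mult_left_mono)
    finally show ?thesis .
  qed
  then have le: "(\<Sum>n. (cmod (taylor_coeff (f k) n))\<^sup>2) \<le> (\<bar>C\<bar> * B)\<^sup>2" for k
    by (intro sqrt_le_D) (simp add: H2_norm_def)
  have "summable (\<lambda>n. (cmod (taylor_coeff (f k) n))\<^sup>2)" for k
    using \<open>X \<subseteq> H2\<close> f by (auto simp: H2_def)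
  from that[OF this le] show ?thesis .
qed

lemma l2_embeds_mem: "l2_embeds E NE \<Longrightarrow> summable (\<lambda>n. (cmod (x n))\<^sup>2) \<Longrightarrow> x \<in> E"
  unfolding l2_embeds_def by blast

lemma l2_embeds_tendsto_0:
  assumes "l2_embeds E NE" and "banach_fun_space E NE"
    and summable: "\<And>k. summable (\<lambda>n. (cmod (x k n))\<^sup>2)"
    and lim: "(\<lambda>k. \<Sum>n. (cmod (x k n))\<^sup>2) \<longlonglongrightarrow> 0"
  shows "(\<lambda>k. NE (x k)) \<longlonglongrightarrow> 0"
proof -
  obtain C where C: "\<And>y. summable (\<lambda>n. (cmod (y n))\<^sup>2) \<Longrightarrow>
      y \<in> E \<and> NE y \<le> C * sqrt (\<Sum>n. (cmod (y n))\<^sup>2)"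
    using assms(1) unfolding l2_embeds_def by blast
  have "(\<lambda>k. C * sqrt (\<Sum>n. (cmod (x k n))\<^sup>2)) \<longlonglongrightarrow> C * sqrt 0"
    by (intro tendsto_intros lim)
  then have upper: "(\<lambda>k. C * sqrt (\<Sum>n. (cmod (x k n))\<^sup>2)) \<longlonglongrightarrow> 0"
    by simp
  show ?thesis
    by (rule tendsto_sandwich[OF _ _ tendsto_const upper])
      (use C[OF summable] banach_fun_space_norm_nonneg[OF assms(2)] in \<open>simp_all add: always_eventually\<close>)
qed

lemma embeds_linf_pointwise_le:
  assumes "embeds_linf E NE"
  obtains C where "\<And>x n. x \<in> E \<Longrightarrow> cmod (x n) \<le> C * NE x"
proof -
  obtain C where C: "\<And>x. x \<in> E \<Longrightarrow> bounded (range x) \<and> (SUP n. cmod (x n)) \<le> C * NE x"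
    using assms unfolding embeds_linf_def by blast
  have "cmod (x n) \<le> C * NE x" if x: "x \<in> E" for x n
  proof -
    obtain K where "\<And>n. cmod (x n) \<le> K"
      using C[OF x] unfolding bounded_iff by blast
    then have "cmod (x n) \<le> (SUP n. cmod (x n))"
      by (intro cSUP_upper bdd_aboveI2) auto
    with C[OF x] show ?thesis by simp
  qed
  then show ?thesis by (rule that)
qed

text \<open>The monomial \<open>z\<^sup>n\<close>, set to \<open>0\<close> off the disc as elements of \<^const>\<open>analytic_U\<close> must be.\<close>

definition monomial_U :: "nat \<Rightarrow> complex \<Rightarrow> complex" where
  "monomial_U n z = (if z \<in> ball 0 1 then z ^ n else 0)"

lemma monomial_U_in_H_inf: "monomial_U n \<in> H_inf"
proof -
  have "(\<lambda>z. z ^ n) holomorphic_on ball 0 1"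
    by (intro holomorphic_intros)
  then have "monomial_U n holomorphic_on ball 0 1"
    by (rule holomorphic_transform) (simp add: monomial_U_def)
  moreover have "monomial_U n ` ball 0 1 \<subseteq> cball 0 1"
    by (auto simp: monomial_U_def norm_power power_le_one)
  then have "bounded (monomial_U n ` ball 0 1)"
    by (rule bounded_subset[OF bounded_cball])
  ultimately show ?thesis
    by (simp add: H_inf_def analytic_U_def monomial_U_def)
qed

lemma H_inf_norm_monomial_U: "0 \<le> H_inf_norm (monomial_U n)" "H_inf_norm (monomial_U n) \<le> 1"
proof -
  have "bdd_above ((\<lambda>z. cmod (monomial_U n z)) ` ball 0 1)"
    by (rule bdd_aboveI[where M=1]) (auto simp: monomial_U_def norm_power power_le_one)
  then show "0 \<le> H_inf_norm (monomial_U n)"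
    unfolding H_inf_norm_def by (rule cSUP_upper2[where x=0]) auto
  show "H_inf_norm (monomial_U n) \<le> 1"
    unfolding H_inf_norm_def by (rule cSUP_least) (auto simp: monomial_U_def norm_power power_le_one)
qed

lemma taylor_coeff_monomial_U: "taylor_coeff (monomial_U n) m = (if m = n then 1 else 0)"
proof -
  have "eventually (\<lambda>z. monomial_U n z = (z - 0) ^ n) (nhds 0)"
    using eventually_nhds_in_open[of "ball (0::complex) 1" 0]
    by (auto simp: monomial_U_def elim!: eventually_mono)
  then have "(deriv ^^ m) (monomial_U n) 0 = (deriv ^^ m) (\<lambda>z. (z - 0) ^ n) 0"
    by (rule higher_deriv_cong_ev) simp
  also have "\<dots> = pochhammer (of_nat (Suc n - m)) m * (0 - 0) ^ (n - m)"
    by (rule higher_deriv_power)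
  finally have "(deriv ^^ m) (monomial_U n) 0 = pochhammer (of_nat (Suc n - m)) m * 0 ^ (n - m)"
    by simp
  then show ?thesis
    by (cases m n rule: linorder_cases)
      (simp_all add: taylor_coeff_def pochhammer_fact[symmetric] pochhammer_0_left)
qed

lemma multiplier_monomial_U: "multiplier lam (monomial_U m) n = (if n = m then lam m else 0)"
  by (simp add: multiplier_def taylor_coeff_monomial_U)

lemma monomials_bounded_in_X:
  assumes "H_inf_embeds X NX" and X: "banach_fun_space X NX"
  shows "monomial_U n \<in> X" and "bounded (range (\<lambda>n. NX (monomial_U n)))"
proof -
  obtain C where "H_inf \<subseteq> X" and C: "\<And>h. h \<in> H_inf \<Longrightarrow> NX h \<le> C * H_inf_norm h"
    using assms(1) unfolding H_inf_embeds_def by blast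
  then show "monomial_U n \<in> X"
    using monomial_U_in_H_inf by blast
  have "\<bar>NX (monomial_U n)\<bar> \<le> \<bar>C\<bar>" for n
  proof -
    have "0 \<le> NX (monomial_U n)"
      using \<open>H_inf \<subseteq> X\<close> monomial_U_in_H_inf by (intro banach_fun_space_norm_nonneg[OF X]) blast
    moreover have "NX (monomial_U n) \<le> C * H_inf_norm (monomial_U n)"
      by (rule C[OF monomial_U_in_H_inf])
    moreover have "C * H_inf_norm (monomial_U n) \<le> \<bar>C\<bar>"
      using mult_right_mono[OF abs_ge_self H_inf_norm_monomial_U(1)]
        mult_left_le[OF H_inf_norm_monomial_U(2) abs_ge_zero] by (rule order_trans)
    ultimately show ?thesis by simp
  qed
  then show "bounded (range (\<lambda>n. NX (monomial_U n)))"
    unfolding bounded_iff by (intro exI[of _ "\<bar>C\<bar>"]) simp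
qed

lemma compact_multiplier_if_tendsto_0:
  assumes "embeds_H2 X NX" and l2: "l2_embeds E NE" and E: "banach_fun_space E NE"
    and lam: "lam \<longlonglongrightarrow> 0"
  shows "compact_multiplier X NX E NE lam"
  unfolding compact_multiplier_def
proof (intro allI impI, elim conjE)
  fix f :: "nat \<Rightarrow> complex \<Rightarrow> complex"
  assume "\<forall>k. f k \<in> X" and "bounded (range (\<lambda>k. NX (f k)))"
  then obtain D where summable: "\<And>k. summable (\<lambda>n. (cmod (taylor_coeff (f k) n))\<^sup>2)"
    and bound: "\<And>k. (\<Sum>n. (cmod (taylor_coeff (f k) n))\<^sup>2) \<le> D"
    using taylor_coeffs_bounded_in_l2[OF assms(1), of f] by auto
  have "cmod (taylor_coeff (f k) n) \<le> sqrt D" for k n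
    using sum_le_suminf[OF summable, of "{n}" k] bound[of k] by (intro real_le_rsqrt) simp
  then have bounded: "bounded (range (\<lambda>k. taylor_coeff (f k) n))" for n
    unfolding bounded_iff by (intro exI[of _ "sqrt D"]) simp
  obtain r where r: "strict_mono r" and conv: "\<And>n. convergent (\<lambda>k. taylor_coeff (f (r k)) n)"
    by (rule bounded_coordinates_imp_convergent_subseq[of "\<lambda>k n. taylor_coeff (f k) n", OF bounded])
      (rule that)
  define a where "a n = lim (\<lambda>k. taylor_coeff (f (r k)) n)" for n
  have a: "(\<lambda>k. taylor_coeff (f (r k)) n) \<longlonglongrightarrow> a n" for n
    using conv[of n] by (simp add: a_def convergent_LIMSEQ_iff)
  note l2_conv = vanishing_multiplier_l2_tendsto[of "\<lambda>k. taylor_coeff (f (r k))" D a lam,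
      OF summable bound a lam]
  have "(\<lambda>n. lam n * a n) \<in> E"
    by (rule l2_embeds_mem[OF l2 l2_conv(1)])
  moreover have "(\<lambda>k. NE (\<lambda>n. multiplier lam (f (r k)) n - lam n * a n)) \<longlonglongrightarrow> 0"
    unfolding multiplier_def using l2_embeds_tendsto_0[OF l2 E l2_conv(2,3)] .
  ultimately show "\<exists>r g. strict_mono r \<and> g \<in> E \<and>
      (\<lambda>k. NE (\<lambda>n. multiplier lam (f (r k)) n - g n)) \<longlonglongrightarrow> 0"
    using r by (intro exI conjI)
qed

lemma subseq_tendsto_0_if_compact_multiplier:
  fixes s :: "nat \<Rightarrow> nat"
  assumes X: "banach_fun_space X NX" and "H_inf_embeds X NX"
    and linf: "embeds_linf E NE" and E: "banach_fun_space E NE"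
    and bm: "bounded_multiplier X NX E NE lam" and cm: "compact_multiplier X NX E NE lam"
    and s: "strict_mono s"
  shows "\<exists>r. strict_mono r \<and> (\<lambda>k. lam (s (r k))) \<longlonglongrightarrow> 0"
proof -
  note monomials = monomials_bounded_in_X[OF assms(2) X]
  have "bounded (range (\<lambda>k. NX (monomial_U (s k))))"
    by (rule bounded_subset[OF monomials(2)]) auto
  with monomials(1) have "(\<forall>k. monomial_U (s k) \<in> X) \<and> bounded (range (\<lambda>k. NX (monomial_U (s k))))"
    by blast
  from cm[unfolded compact_multiplier_def, rule_format, OF this]
  obtain r g where r: "strict_mono r" and "g \<in> E"
    and lim: "(\<lambda>k. NE (\<lambda>n. multiplier lam (monomial_U (s (r k))) n - g n)) \<longlonglongrightarrow> 0"
    by blast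
  obtain C where C: "\<And>x n. x \<in> E \<Longrightarrow> cmod (x n) \<le> C * NE x"
    by (rule embeds_linf_pointwise_le[OF linf]) (rule that)
  have "multiplier lam (monomial_U m) \<in> E" for m
    using bm monomials(1) unfolding bounded_multiplier_def by blast
  then have "(\<lambda>n. multiplier lam (monomial_U (s (r k))) n - g n) \<in> E" for k
    by (rule banach_fun_space_diff[OF E _ \<open>g \<in> E\<close>])
  from C[OF this]
  have close: "cmod ((if n = s (r k) then lam (s (r k)) else 0) - g n)
      \<le> C * NE (\<lambda>n. multiplier lam (monomial_U (s (r k))) n - g n)" for k n
    by (simp add: multiplier_monomial_U)
  have m: "filterlim (\<lambda>k. s (r k)) at_top sequentially"
    using filterlim_subseq[OF strict_mono_o[OF s r]] by (simp add: o_def)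
  have t: "(\<lambda>k. C * NE (\<lambda>n. multiplier lam (monomial_U (s (r k))) n - g n)) \<longlonglongrightarrow> 0"
    using tendsto_mult_right_zero[OF lim] by simp
  show ?thesis
    using r spike_heights_tendsto_0[OF m close t] by blast
qed

theorem theorem2p5:
  fixes X :: "(complex \<Rightarrow> complex) set" and NX :: "(complex \<Rightarrow> complex) \<Rightarrow> real"
    and E :: "(nat \<Rightarrow> complex) set" and NE :: "(nat \<Rightarrow> complex) \<Rightarrow> real"
    and lam :: "nat \<Rightarrow> complex"
  assumes "banach_space_analytic_U X NX"
    and "H_inf_embeds X NX"
    and "embeds_H2 X NX"
    and "banach_seq_lattice E NE"
    and "order_continuous E NE"
    and "l2_embeds E NE"
    and "embeds_linf E NE"
    and "bounded_multiplier X NX E NE lam"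
  shows "compact_multiplier X NX E NE lam \<longleftrightarrow> limsup (\<lambda>n. ereal (cmod (lam n))) = 0"
proof -
  have X: "banach_fun_space X NX" and E: "banach_fun_space E NE"
    using assms(1,4) by (simp_all add: banach_space_analytic_U_def banach_seq_lattice_def)
  show ?thesis
  proof
    assume compact: "compact_multiplier X NX E NE lam"
    show "limsup (\<lambda>n. ereal (cmod (lam n))) = 0"
      by (rule limsup_norm_eq_0_if_subseqs_tendsto_0,
          rule subseq_tendsto_0_if_compact_multiplier[OF X assms(2,7) E assms(8) compact])
  next
    assume "limsup (\<lambda>n. ereal (cmod (lam n))) = 0"
    then have "lam \<longlonglongrightarrow> 0"
      by (simp add: limsup_norm_eq_0_iff)
    then show "compact_multiplier X NX E NE lam"
      by (rule compact_multiplier_if_tendsto_0[OF assms(3,6) E])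
  qed
qed

end
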